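(* For $r\ge0$ and integers $M\ge1$, $N\ge1$ let $$\eta(r,M,N):=\int_0^\infty\frac{1}{(1+e^{8r}\gamma^2)^M}\Big(\frac{\gamma^2}{1+\gamma^2}\Big)^N\frac{d\gamma}{\gamma^2}.$$ Then: (i) $\frac\pi2e^{-4r}c^{(M)}_1\le\eta(r,M,1)\le\frac\pi2e^{-4r}c^{(M-1)}_1$; (ii) if $M>N$: $\frac{1}{2^M2^N}e^{-8(M+1)r}\frac{1}{2M+1}\le\eta(r,M,N)\le e^{-8r(N-1)-4r}\frac\pi2c^{(M-N)}_N+e^{-8Mr}\frac{1}{2M-1}$; (iii) if $M\le N$: $\frac{1}{2^M2^N}e^{-8(M+1)r}\frac{1}{2M+1}\le\eta(r,M,N)\le e^{-8r(M-1)-4r}\frac\pi2c^{(0)}_M+e^{-8Mr}\frac{1}{2M-1}$.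
   Context: For integers $k\ge1$, $j\ge0$: $c^{(j)}_k:=\frac2\pi\int_0^\infty\Big(\frac{\gamma^2}{1+\gamma^2}\Big)^k\frac{1}{(1+\gamma^2)^j}\frac{d\gamma}{\gamma^2}=\frac1\pi\frac{\Gamma(j+\frac12)\Gamma(k-\frac12)}{\Gamma(j+k)}$, with $\Gamma$ the Gamma function. *)

theory Defs
  imports "HOL-Analysis.Analysis"
begin

definition c_coef :: "nat \<Rightarrow> nat \<Rightarrow> real" where
  "c_coef j k = (2 / pi) *
     (LINT g:{0<..}|lborel. ((g\<^sup>2 / (1 + g\<^sup>2)) ^ k) * (1 / (1 + g\<^sup>2) ^ j) / g\<^sup>2)"

definition eta :: "real \<Rightarrow> nat \<Rightarrow> nat \<Rightarrow> real" where
  "eta r M N = (LINT g:{0<..}|lborel.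
     (1 / (1 + exp (8 * r) * g\<^sup>2) ^ M) * ((g\<^sup>2 / (1 + g\<^sup>2)) ^ N) / g\<^sup>2)"

end

theory Submission
  imports Defs "HOL-Real_Asymp.Real_Asymp"
begin

text \<open>
  Put a = exp(4r), so that exp(8r) g^2 = (a g)^2. The substitution t = a g turns the integral
  defining c_k^(j) into a^(2k-1) times an integral in g whose integrand carries the same factor
  (1 + (a g)^2)^(-M) as the integrand of eta once j + k = M. The upper bounds then follow
  pointwise from (g^2/(1+g^2))^N / g^2 \<le> g^(2k-2) for 1 \<le> k \<le> N, and the lower bound in (i) from 1 + g^2 \<le> 1 + (a g)^2.
  For the remaining lower bound, restrict to g \<ge> 1, where the integrand of eta is at least
  2^(-M-N) a^(-2M) g^(-2M-2).
\<close>

lemma has_bochner_integral_FTC_atLeast: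
  fixes f F :: "real \<Rightarrow> real"
  assumes f_borel: "f \<in> borel_measurable borel"
    and F: "\<And>x. a \<le> x \<Longrightarrow> DERIV F x :> f x"
    and nonneg: "\<And>x. a \<le> x \<Longrightarrow> 0 \<le> f x"
    and lim: "(F \<longlongrightarrow> T) at_top"
  shows "has_bochner_integral lborel (\<lambda>x. indicator {a..} x *\<^sub>R f x) (T - F a)"
proof -
  have "F a \<le> F x" if "a \<le> x" for x
    using F nonneg that by (intro DERIV_nonneg_imp_nondecreasing[of a x F]) (auto intro: order_trans)
  then have "F a \<le> T"
    by (intro tendsto_lowerbound[OF lim]) (auto simp: eventually_at_top_linorder)
  moreover have "(\<integral>\<^sup>+x. ennreal (indicator {a..} x *\<^sub>R f x) \<partial>lborel) = (\<integral>\<^sup>+x. ennreal (f x) * indicator {a..} x \<partial>lborel)"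
    by (intro nn_integral_cong) (auto split: split_indicator)
  ultimately show ?thesis
    using nonneg nn_integral_FTC_atLeast[OF assms]
    by (intro has_bochner_integral_nn_integral)
      (auto simp: ennreal_minus split: split_indicator intro!: borel_measurable_times f_borel)
qed

lemma has_bochner_integral_inverse_power_to_inf:
  fixes a :: real
  assumes "a > 0"
  shows "has_bochner_integral lborel (\<lambda>x. indicator {a..} x *\<^sub>R (1 / x ^ Suc (Suc n)))
           (1 / (real (Suc n) * a ^ Suc n))"
proof -
  define F where "F x = - 1 / (real (Suc n) * x ^ Suc n)" for x :: real
  have "has_bochner_integral lborel (\<lambda>x. indicator {a..} x *\<^sub>R (1 / x ^ Suc (Suc n))) (0 - F a)"
  proof (rule has_bochner_integral_FTC_atLeast)
    show "(F \<longlongrightarrow> 0) at_top"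
      unfolding F_def by real_asymp
    fix x assume "a \<le> x"
    with assms have "x > 0" by linarith
    then show "DERIV F x :> 1 / x ^ Suc (Suc n)"
      unfolding F_def
      by (auto intro!: derivative_eq_intros simp: divide_simps power2_eq_square)
        (cases n; simp add: algebra_simps)
  qed (use assms in auto)
  then show ?thesis
    by (simp add: F_def)
qed

lemma set_integrable_inverse_1_plus_square:
  "set_integrable lborel {0<..} (\<lambda>t::real. 1 / (1 + t\<^sup>2))"
proof -
  have "has_bochner_integral lborel (\<lambda>t. indicator {0..} t *\<^sub>R (1 / (1 + t\<^sup>2))) (pi / 2 - arctan 0)"
  proof (rule has_bochner_integral_FTC_atLeast)
    show "DERIV arctan t :> 1 / (1 + t\<^sup>2)" for t
      using DERIV_arctan[of t] by (simp add: inverse_eq_divide)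
  qed (auto intro: tendsto_arctan_at_top)
  then have "set_integrable lborel {0..} (\<lambda>t::real. 1 / (1 + t\<^sup>2))"
    by (simp add: set_integrable_def has_bochner_integral_iff)
  then show ?thesis
    by (rule set_integrable_subset) auto
qed

lemma set_integral_greaterThan_0_scale:
  fixes f :: "real \<Rightarrow> real"
  assumes "a > 0"
  shows "(LINT t:{0<..}|lborel. f t) = a * (LINT g:{0<..}|lborel. f (a * g))"
proof -
  have "(LINT t:{0<..}|lborel. f t) = (\<integral>t. indicator {0<..} t *\<^sub>R f t \<partial>lborel)"
    by (simp add: set_lebesgue_integral_def)
  also have "\<dots> = \<bar>a\<bar> *\<^sub>R (\<integral>g. indicator {0<..} (0 + a * g) *\<^sub>R f (0 + a * g) \<partial>lborel)"
    using assms by (intro lborel_integral_real_affine) simp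
  also have "(\<lambda>g. indicator {0<..} (0 + a * g) *\<^sub>R f (0 + a * g)) = (\<lambda>g. indicator {0<..} g *\<^sub>R f (a * g))"
    using assms by (auto simp: fun_eq_iff zero_less_mult_iff split: split_indicator)
  finally show ?thesis
    using assms by (simp add: set_lebesgue_integral_def)
qed

lemma set_integrable_greaterThan_0_scale:
  fixes f :: "real \<Rightarrow> real"
  assumes "a > 0" and "set_integrable lborel {0<..} f"
  shows "set_integrable lborel {0<..} (\<lambda>g. f (a * g))"
proof -
  have "integrable lborel (\<lambda>g. indicator {0<..} (0 + a * g) *\<^sub>R f (0 + a * g))"
    using assms by (intro lborel_integrable_real_affine) (auto simp: set_integrable_def)
  also have "(\<lambda>g. indicator {0<..} (0 + a * g) *\<^sub>R f (0 + a * g)) = (\<lambda>g. indicator {0<..} g *\<^sub>R f (a * g))"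
    using assms by (auto simp: fun_eq_iff zero_less_mult_iff split: split_indicator)
  finally show ?thesis
    by (simp add: set_integrable_def)
qed

definition c_kernel :: "nat \<Rightarrow> nat \<Rightarrow> real \<Rightarrow> real" where
  "c_kernel j k t = ((t\<^sup>2 / (1 + t\<^sup>2)) ^ k) * (1 / (1 + t\<^sup>2) ^ j) / t\<^sup>2"

definition eta_kernel :: "real \<Rightarrow> nat \<Rightarrow> nat \<Rightarrow> real \<Rightarrow> real" where
  "eta_kernel a M N g = (1 / (1 + (a * g)\<^sup>2) ^ M) * ((g\<^sup>2 / (1 + g\<^sup>2)) ^ N) / g\<^sup>2"

lemma c_coef_scale:
  assumes "a > 0"
  shows "pi / 2 * c_coef j k = a * (LINT g:{0<..}|lborel. c_kernel j k (a * g))"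
  using set_integral_greaterThan_0_scale[OF assms, of "c_kernel j k"]
  by (simp add: c_coef_def c_kernel_def)

lemma eta_eq_integral_eta_kernel:
  "eta r M N = (LINT g:{0<..}|lborel. eta_kernel (exp (4 * r)) M N g)"
proof -
  have "exp (8 * r) * g\<^sup>2 = (exp (4 * r) * g)\<^sup>2" for g
    by (simp add: power_mult_distrib power2_eq_square flip: exp_add)
  then show ?thesis
    by (simp add: eta_def eta_kernel_def)
qed

lemma c_kernel_Suc:
  assumes "t \<noteq> 0"
  shows "c_kernel j (Suc k) t = t ^ (2 * k) / (1 + t\<^sup>2) ^ (Suc k + j)"
proof -
  have "c_kernel j (Suc k) t = (t\<^sup>2) ^ k * t\<^sup>2 / ((1 + t\<^sup>2) ^ Suc k * (1 + t\<^sup>2) ^ j) / t\<^sup>2"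
    by (simp add: c_kernel_def power_divide mult.commute)
  also have "\<dots> = (t\<^sup>2) ^ k / ((1 + t\<^sup>2) ^ Suc k * (1 + t\<^sup>2) ^ j)"
    using assms by simp
  finally show ?thesis
    by (simp add: power_mult power_add)
qed

lemma c_kernel_nonneg: "0 \<le> c_kernel j k t"
  by (simp add: c_kernel_def add_pos_nonneg)

lemma c_kernel_Suc_le: "c_kernel j (Suc k) t \<le> 1 / (1 + t\<^sup>2)"
proof (cases "t = 0")
  case False
  have "t ^ (2 * k) \<le> (1 + t\<^sup>2) ^ k"
    by (simp add: power_mult power_mono)
  also have "\<dots> \<le> (1 + t\<^sup>2) ^ (k + j)"
    by (rule power_increasing) auto
  finally show ?thesis
    using False by (simp add: c_kernel_Suc power_add divide_simps add_pos_nonneg mult_ac)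
qed (simp add: c_kernel_def)

lemma c_kernel_0_le_power:
  assumes "k \<le> n"
  shows "c_kernel 0 (Suc n) t \<le> t ^ (2 * k)"
proof (cases "t = 0")
  case False
  have "t ^ (2 * n) = t ^ (2 * k) * (t\<^sup>2) ^ (n - k)"
    using assms by (simp add: power_mult power_add[symmetric])
  also have "\<dots> \<le> t ^ (2 * k) * (1 + t\<^sup>2) ^ (n - k)"
    by (intro mult_left_mono power_mono) (auto simp: power_mult)
  also have "\<dots> \<le> t ^ (2 * k) * (1 + t\<^sup>2) ^ Suc n"
    by (intro mult_left_mono power_increasing) (auto simp: power_mult)
  finally show ?thesis
    using False by (simp add: c_kernel_Suc divide_le_eq add_pos_nonneg)
qed (simp add: c_kernel_def)

lemma set_integrable_c_kernel: "set_integrable lborel {0<..} (c_kernel j (Suc k))"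
proof (rule set_integrable_bound[OF set_integrable_inverse_1_plus_square])
  show "set_borel_measurable lborel {0<..} (c_kernel j (Suc k))"
    unfolding set_borel_measurable_def c_kernel_def by measurable
  show "AE t in lborel. t \<in> {0<..} \<longrightarrow> norm (c_kernel j (Suc k) t) \<le> norm (1 / (1 + t\<^sup>2))"
    using c_kernel_nonneg c_kernel_Suc_le by (intro AE_I2) (auto simp: add_pos_nonneg)
qed

lemma eta_kernel_eq: "eta_kernel a M N g = c_kernel 0 N g / (1 + (a * g)\<^sup>2) ^ M"
  by (simp add: eta_kernel_def c_kernel_def)

lemma eta_kernel_nonneg: "0 \<le> eta_kernel a M N g"
  by (simp add: eta_kernel_eq c_kernel_nonneg add_pos_nonneg)

lemma eta_kernel_Suc_le: "eta_kernel a M (Suc n) g \<le> 1 / (1 + g\<^sup>2)"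
proof -
  have "1 \<le> (1 + (a * g)\<^sup>2) ^ M"
    by (simp add: one_le_power)
  then have "eta_kernel a M (Suc n) g \<le> c_kernel 0 (Suc n) g / 1"
    unfolding eta_kernel_eq by (intro divide_left_mono c_kernel_nonneg) (auto intro: order.strict_trans2[OF zero_less_one])
  then show ?thesis
    using c_kernel_Suc_le[of 0 n g] by simp
qed

lemma set_integrable_eta_kernel: "set_integrable lborel {0<..} (eta_kernel a M (Suc n))"
proof (rule set_integrable_bound[OF set_integrable_inverse_1_plus_square])
  show "set_borel_measurable lborel {0<..} (eta_kernel a M (Suc n))"
    unfolding set_borel_measurable_def eta_kernel_def by measurable
  show "AE g in lborel. g \<in> {0<..} \<longrightarrow> norm (eta_kernel a M (Suc n) g) \<le> norm (1 / (1 + g\<^sup>2))"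
    using eta_kernel_nonneg eta_kernel_Suc_le by (intro AE_I2) (auto simp: add_pos_nonneg)
qed

lemma c_kernel_scale_le_eta_kernel:
  assumes "1 \<le> a"
  shows "c_kernel M 1 (a * g) \<le> eta_kernel a M 1 g"
proof (cases "g = 0")
  case False
  have "1 \<le> a\<^sup>2"
    using assms by (simp add: one_le_power)
  then have "g\<^sup>2 \<le> (a * g)\<^sup>2"
    using mult_right_mono[of 1 "a\<^sup>2" "g\<^sup>2"] by (simp add: power_mult_distrib)
  then have "1 / (1 + (a * g)\<^sup>2) \<le> 1 / (1 + g\<^sup>2)"
    by (intro divide_left_mono) (auto simp: add_pos_nonneg)
  then have "1 / (1 + (a * g)\<^sup>2) ^ M * (1 / (1 + (a * g)\<^sup>2)) \<le> 1 / (1 + (a * g)\<^sup>2) ^ M * (1 / (1 + g\<^sup>2))"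
    by (rule mult_left_mono) (simp add: add_pos_nonneg)
  then show ?thesis
    using False assms by (simp add: c_kernel_Suc[of "a * g" M 0, simplified] eta_kernel_eq c_kernel_def mult_ac)
qed (simp add: c_kernel_def eta_kernel_def)

lemma eta_kernel_le_c_kernel_scale:
  assumes "a \<noteq> 0" and "k \<le> n" and "Suc k + j = M"
  shows "eta_kernel a M (Suc n) g \<le> c_kernel j (Suc k) (a * g) / a ^ (2 * k)"
proof (cases "g = 0")
  case False
  have "eta_kernel a M (Suc n) g \<le> g ^ (2 * k) / (1 + (a * g)\<^sup>2) ^ M"
    unfolding eta_kernel_eq
    by (intro divide_right_mono c_kernel_0_le_power assms) (simp add: add_pos_nonneg)
  also have "\<dots> = c_kernel j (Suc k) (a * g) / a ^ (2 * k)"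
    using False assms by (simp add: c_kernel_Suc power_mult_distrib)
  finally show ?thesis .
qed (simp add: c_kernel_def eta_kernel_def)

lemma eta_kernel_ge_inverse_power:
  assumes "1 \<le> a" and "1 \<le> g"
  shows "1 / (2 ^ M * 2 ^ N * a ^ (2 * M)) / g ^ (2 * M + 2) \<le> eta_kernel a M N g"
proof -
  have g2: "1 \<le> g\<^sup>2"
    using assms by (simp add: one_le_power)
  have "1 \<le> a * g"
    using assms mult_mono[of 1 a 1 g] by simp
  then have ag2: "1 \<le> (a * g)\<^sup>2"
    by (simp add: one_le_power)
  then have "0 < (a * g)\<^sup>2"
    by linarith
  with ag2 have "1 / (2 * (a * g)\<^sup>2) ^ M \<le> 1 / (1 + (a * g)\<^sup>2) ^ M"
    by (intro divide_left_mono power_mono) (auto simp: add_pos_nonneg)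
  moreover have "(1 / 2) ^ N \<le> (g\<^sup>2 / (1 + g\<^sup>2)) ^ N"
    using g2 by (intro power_mono) (auto simp: field_simps)
  ultimately have "1 / (2 * (a * g)\<^sup>2) ^ M * (1 / 2) ^ N / g\<^sup>2 \<le> eta_kernel a M N g"
    unfolding eta_kernel_def using g2 by (intro divide_right_mono mult_mono) auto
  also have "1 / (2 * (a * g)\<^sup>2) ^ M * (1 / 2) ^ N / g\<^sup>2 = 1 / (2 ^ M * 2 ^ N * a ^ (2 * M)) / g ^ (2 * M + 2)"
    by (simp add: power_mult_distrib power_mult power_add field_simps power2_eq_square power_one_over)
  finally show ?thesis .
qed

lemma eta_1_ge_c_coef:
  assumes "0 \<le> r"
  shows "pi / 2 * exp (-4 * r) * c_coef M 1 \<le> eta r M 1"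
proof -
  define a where "a = exp (4 * r)"
  have "1 \<le> a" and "0 < a"
    using assms by (simp_all add: a_def)
  have "pi / 2 * exp (-4 * r) * c_coef M 1 = pi / 2 * c_coef M 1 / a"
    by (simp add: a_def exp_minus')
  also have "\<dots> = (LINT g:{0<..}|lborel. c_kernel M 1 (a * g))"
    unfolding c_coef_scale[OF \<open>0 < a\<close>] using \<open>0 < a\<close> by simp
  also have "\<dots> \<le> (LINT g:{0<..}|lborel. eta_kernel a M 1 g)"
    using \<open>1 \<le> a\<close> \<open>0 < a\<close> set_integrable_c_kernel[of M 0] set_integrable_eta_kernel[of a M 0]
    by (intro set_integral_mono set_integrable_greaterThan_0_scale c_kernel_scale_le_eta_kernel) auto
  also have "\<dots> = eta r M 1"
    by (simp add: a_def eta_eq_integral_eta_kernel)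
  finally show ?thesis .
qed

lemma eta_le_c_coef:
  assumes "1 \<le> k" and "k \<le> N" and "k + j = M"
  shows "eta r M N \<le> exp (-8 * r * (real k - 1) - 4 * r) * (pi / 2) * c_coef j k"
proof -
  obtain k' where k: "k = Suc k'"
    using assms(1) by (cases k) auto
  obtain n where N: "N = Suc n"
    using assms(1,2) by (cases N) auto
  define a where "a = exp (4 * r)"
  have "0 < a"
    by (simp add: a_def)
  have exponent: "-8 * r * (real k - 1) - 4 * r = - (real (2 * k' + 1) * (4 * r))"
    using k by (simp add: algebra_simps)
  have "eta r M N \<le> (LINT g:{0<..}|lborel. c_kernel j k (a * g) / a ^ (2 * k'))"
    unfolding eta_eq_integral_eta_kernel a_def[symmetric] N k
    using \<open>0 < a\<close> assms set_integrable_c_kernel[of j k'] k N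
    by (intro set_integral_mono set_integrable_eta_kernel set_integrable_divide
        set_integrable_greaterThan_0_scale eta_kernel_le_c_kernel_scale) auto
  also have "\<dots> = pi / 2 * c_coef j k / a ^ (2 * k' + 1)"
    unfolding c_coef_scale[OF \<open>0 < a\<close>] using \<open>0 < a\<close> by simp
  also have "\<dots> = exp (-8 * r * (real k - 1) - 4 * r) * (pi / 2) * c_coef j k"
    unfolding a_def exponent exp_minus' exp_of_nat_mult by simp
  finally show ?thesis .
qed

lemma eta_ge_exp:
  assumes "0 \<le> r" and "1 \<le> N"
  shows "1 / (2 ^ M * 2 ^ N) * exp (-8 * real M * r) * (1 / (2 * real M + 1)) \<le> eta r M N"
proof -
  obtain n where N: "N = Suc n"
    using assms(2) by (cases N) auto
  define a where "a = exp (4 * r)"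
  have "1 \<le> a"
    using assms by (simp add: a_def)
  define K where "K = 1 / (2 ^ M * 2 ^ N * a ^ (2 * M))"
  define L where "L g = indicator {1..} g * (K / g ^ Suc (Suc (2 * M)))" for g :: real
  have L_eq: "(\<lambda>g. indicator {0<..} g *\<^sub>R L g) = (\<lambda>g. K * (indicator {1..} g *\<^sub>R (1 / g ^ Suc (Suc (2 * M)))))"
    by (auto simp: L_def fun_eq_iff split: split_indicator)
  have "real (Suc (2 * M)) * 1 ^ Suc (2 * M) = 2 * real M + 1"
    by simp
  from has_bochner_integral_mult_right[OF has_bochner_integral_inverse_power_to_inf[of 1 "2 * M"], of K, unfolded this]
  have "has_bochner_integral lborel (\<lambda>g. indicator {0<..} g *\<^sub>R L g) (K * (1 / (2 * real M + 1)))"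
    unfolding L_eq by simp
  then have L_integrable: "set_integrable lborel {0<..} L"
    and L_integral: "(LINT g:{0<..}|lborel. L g) = K * (1 / (2 * real M + 1))"
    by (simp_all add: set_integrable_def set_lebesgue_integral_def has_bochner_integral_iff)
  have exponent: "-8 * real M * r = - (real (2 * M) * (4 * r))"
    by simp
  have "1 / (2 ^ M * 2 ^ N) * exp (-8 * real M * r) * (1 / (2 * real M + 1)) = (LINT g:{0<..}|lborel. L g)"
    unfolding L_integral K_def a_def exponent exp_minus' exp_of_nat_mult by simp
  also have "L g \<le> eta_kernel a M N g" for g
    using eta_kernel_ge_inverse_power[OF \<open>1 \<le> a\<close>, of g M N] eta_kernel_nonneg
    by (cases "1 \<le> g") (auto simp: L_def K_def)
  then have "(LINT g:{0<..}|lborel. L g) \<le> (LINT g:{0<..}|lborel. eta_kernel a M N g)"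
    unfolding N by (intro set_integral_mono L_integrable set_integrable_eta_kernel)
  also have "\<dots> = eta r M N"
    by (simp add: a_def eta_eq_integral_eta_kernel)
  finally show ?thesis .
qed

theorem lemma5p4:
  fixes r :: real and M N :: nat
  assumes "r \<ge> 0" and "M \<ge> 1" and "N \<ge> 1"
  shows "(pi / 2 * exp (-4 * r) * c_coef M 1 \<le> eta r M 1 \<and>
          eta r M 1 \<le> pi / 2 * exp (-4 * r) * c_coef (M - 1) 1) \<and>
         (M > N \<longrightarrow>
           1 / (2 ^ M * 2 ^ N) * exp (-8 * (real M + 1) * r) * (1 / (2 * real M + 1)) \<le> eta r M N \<and>
           eta r M N \<le> exp (-8 * r * (real N - 1) - 4 * r) * (pi / 2) * c_coef (M - N) N
                        + exp (-8 * real M * r) * (1 / (2 * real M - 1))) \<and>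
         (M \<le> N \<longrightarrow>
           1 / (2 ^ M * 2 ^ N) * exp (-8 * (real M + 1) * r) * (1 / (2 * real M + 1)) \<le> eta r M N \<and>
           eta r M N \<le> exp (-8 * r * (real M - 1) - 4 * r) * (pi / 2) * c_coef 0 M
                        + exp (-8 * real M * r) * (1 / (2 * real M - 1)))"
proof -
  have lower: "1 / (2 ^ M * 2 ^ N) * exp (-8 * (real M + 1) * r) * (1 / (2 * real M + 1)) \<le> eta r M N"
  proof -
    have "exp (-8 * (real M + 1) * r) \<le> exp (-8 * real M * r)"
      using assms(1) by (simp add: algebra_simps)
    then have "1 / (2 ^ M * 2 ^ N) * exp (-8 * (real M + 1) * r) * (1 / (2 * real M + 1))
        \<le> 1 / (2 ^ M * 2 ^ N) * exp (-8 * real M * r) * (1 / (2 * real M + 1))"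
      by (intro mult_right_mono mult_left_mono) auto
    also have "\<dots> \<le> eta r M N"
      using assms by (intro eta_ge_exp) auto
    finally show ?thesis .
  qed
  have tail: "0 \<le> exp (-8 * real M * r) * (1 / (2 * real M - 1))"
    using assms(2) by simp
  have "eta r M 1 \<le> exp (-8 * r * (real 1 - 1) - 4 * r) * (pi / 2) * c_coef (M - 1) 1"
    using assms by (intro eta_le_c_coef) auto
  then have upper_1: "eta r M 1 \<le> pi / 2 * exp (-4 * r) * c_coef (M - 1) 1"
    by (simp add: mult_ac)
  show ?thesis
  proof (intro conjI impI)
    assume "N < M"
    then show "eta r M N \<le> exp (-8 * r * (real N - 1) - 4 * r) * (pi / 2) * c_coef (M - N) N
                        + exp (-8 * real M * r) * (1 / (2 * real M - 1))"
      using assms by (intro add_increasing2[OF tail] eta_le_c_coef) auto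
  next
    assume "M \<le> N"
    then show "eta r M N \<le> exp (-8 * r * (real M - 1) - 4 * r) * (pi / 2) * c_coef 0 M
                        + exp (-8 * real M * r) * (1 / (2 * real M - 1))"
      using assms by (intro add_increasing2[OF tail] eta_le_c_coef) auto
  qed (use eta_1_ge_c_coef[OF assms(1)] upper_1 lower in auto)
qed

end
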